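(* Let $V$ be a simple Yetter-Drinfeld module over $H=B(n,w,\gamma)$ with $\dim_\Bbbk V=p+1$ for some $p\ge0$, and let $v\in V$ be a standard element of type $(\alpha,\beta,x^rg^i)$ with $\alpha,\beta\in\Bbbk^*$, $r,i\in\mathbb{Z}$. If $u$ is any standard element of $V$, then $u=\lambda v$ for some $\lambda\in\Bbbk^*$.
   Context: $\Bbbk$ is an algebraically closed field of characteristic $0$; $n,w$ positive integers, $\gamma$ a primitive $n$-th root of unity. $H=B(n,w,\gamma)$ is the Hopf algebra generated by $x^{\pm1},g,y$ with relations $xx^{-1}=x^{-1}x=1$, $xg=gx$, $xy=yx$, $yg=\gamma gy$, $y^n=1-x^w=1-g^n$, with $\Delta(x)=x\otimes x$, $\Delta(g)=g\otimes g$, $\Delta(y)=y\otimes g+1\otimes y$, $\varepsilon(x)=\varepsilon(g)=1$, $\varepsilon(y)=0$, $S(x)=x^{-1}$, $S(g)=g^{-1}$, $S(y)=-yg^{-1}$; $G(H)=\{g^jx^k\}$. A (left-left) Yetter-Drinfeld module is a left $H$-module, left $H$-comodule $(V,\cdot,\delta)$ with $\delta(h\cdot v)=h_{(1)}v_{(-1)}S(h_{(3)})\otimes h_{(2)}\cdot v_{(0)}$; simple means no nonzero proper Yetter-Drinfeld submodules. A nonzero $v\in V$ is a standard element of type $(\alpha,\beta,h)$ if $h\in G(H)$, $\alpha,\beta\in\Bbbk^*$, $x\cdot v=\alpha v$, $g\cdot v=\beta v$, $\delta(v)=h\otimes v$. *)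

theory Defs
  imports "HOL-Computational_Algebra.Polynomial"
begin

text \<open>Elements of H are finitely supported functions on the index set
  int x nat x nat; the index (k,j,l) with j < n, l < n stands for the basis
  element x^k g^j y^l.  H (x) H and H (x) H (x) H are represented likewise
  on pairs / triples of indices, and H (x) V by functions bidx => V.\<close>

type_synonym bidx = "int \<times> nat \<times> nat"

definition bvalid :: "nat \<Rightarrow> bidx \<Rightarrow> bool" where
  "bvalid n s \<longleftrightarrow> fst (snd s) < n \<and> snd (snd s) < n"

definition supp :: "('a \<Rightarrow> 'b::zero) \<Rightarrow> 'a set" where
  "supp f = {s. f s \<noteq> 0}"

definition ebas :: "'a \<Rightarrow> 'a \<Rightarrow> 'k::zero_neq_one" where
  "ebas s = (\<lambda>t. if t = s then 1 else 0)"

definition isH :: "nat \<Rightarrow> (bidx \<Rightarrow> 'k::zero) \<Rightarrow> bool" where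
  "isH n f \<longleftrightarrow> finite (supp f) \<and> (\<forall>s\<in>supp f. bvalid n s)"

text \<open>The monomial x^k g^j y^l (k, j integers, l natural) written in the basis,
  using g^n = x^w and y^n = 1 - x^w (x central, x y = y x).\<close>
definition mono :: "nat \<Rightarrow> nat \<Rightarrow> int \<Rightarrow> int \<Rightarrow> nat \<Rightarrow> bidx \<Rightarrow> 'k::comm_ring_1" where
  "mono n w k j l = (\<lambda>t. \<Sum>i\<le>l div n. (-1)^i * of_nat ((l div n) choose i) *
      ebas (k + int w * (j div int n) + int w * int i, nat (j mod int n), l mod n) t)"

text \<open>product of basis elements: x^a g^b y^c * x^k g^j y^l = gamma^(c j) x^(a+k) g^(b+j) y^(c+l)\<close>
definition bprod :: "nat \<Rightarrow> nat \<Rightarrow> 'k::comm_ring_1 \<Rightarrow> bidx \<Rightarrow> bidx \<Rightarrow> bidx \<Rightarrow> 'k" where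
  "bprod n w \<gamma> s s' = (case s of (a, b, c) \<Rightarrow> case s' of (k, j, l) \<Rightarrow>
      (\<lambda>t. \<gamma> ^ (c * j) * mono n w (a + k) (int b + int j) (c + l) t))"

definition hmult :: "nat \<Rightarrow> nat \<Rightarrow> 'k::comm_ring_1 \<Rightarrow> (bidx \<Rightarrow> 'k) \<Rightarrow> (bidx \<Rightarrow> 'k) \<Rightarrow> bidx \<Rightarrow> 'k" where
  "hmult n w \<gamma> f g = (\<lambda>t. \<Sum>s\<in>supp f. \<Sum>s'\<in>supp g. f s * g s' * bprod n w \<gamma> s s' t)"

definition hmult2 :: "nat \<Rightarrow> nat \<Rightarrow> 'k::comm_ring_1 \<Rightarrow> (bidx \<times> bidx \<Rightarrow> 'k) \<Rightarrow> (bidx \<times> bidx \<Rightarrow> 'k)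
    \<Rightarrow> bidx \<times> bidx \<Rightarrow> 'k" where
  "hmult2 n w \<gamma> F G = (\<lambda>(t1, t2). \<Sum>(s1, s2)\<in>supp F. \<Sum>(r1, r2)\<in>supp G.
      F (s1, s2) * G (r1, r2) * bprod n w \<gamma> s1 r1 t1 * bprod n w \<gamma> s2 r2 t2)"

definition hmult3 :: "nat \<Rightarrow> nat \<Rightarrow> 'k::comm_ring_1 \<Rightarrow> (bidx \<times> bidx \<times> bidx \<Rightarrow> 'k)
    \<Rightarrow> (bidx \<times> bidx \<times> bidx \<Rightarrow> 'k) \<Rightarrow> bidx \<times> bidx \<times> bidx \<Rightarrow> 'k" where
  "hmult3 n w \<gamma> F G = (\<lambda>(t1, t2, t3). \<Sum>(s1, s2, s3)\<in>supp F. \<Sum>(r1, r2, r3)\<in>supp G.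
      F (s1, s2, s3) * G (r1, r2, r3) * bprod n w \<gamma> s1 r1 t1 * bprod n w \<gamma> s2 r2 t2
        * bprod n w \<gamma> s3 r3 t3)"

definition tens2 :: "('a \<Rightarrow> 'k::times) \<Rightarrow> ('b \<Rightarrow> 'k) \<Rightarrow> 'a \<times> 'b \<Rightarrow> 'k" where
  "tens2 f g = (\<lambda>(t1, t2). f t1 * g t2)"

definition tens3 :: "('a \<Rightarrow> 'k::times) \<Rightarrow> ('b \<Rightarrow> 'k) \<Rightarrow> ('c \<Rightarrow> 'k) \<Rightarrow> 'a \<times> 'b \<times> 'c \<Rightarrow> 'k" where
  "tens3 f g h = (\<lambda>(t1, t2, t3). f t1 * g t2 * h t3)"

definition Hone :: "nat \<Rightarrow> nat \<Rightarrow> bidx \<Rightarrow> 'k::comm_ring_1" where "Hone n w = mono n w 0 0 0"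
definition Hx :: "nat \<Rightarrow> nat \<Rightarrow> bidx \<Rightarrow> 'k::comm_ring_1" where "Hx n w = mono n w 1 0 0"
definition Hg :: "nat \<Rightarrow> nat \<Rightarrow> bidx \<Rightarrow> 'k::comm_ring_1" where "Hg n w = mono n w 0 1 0"
definition Hy :: "nat \<Rightarrow> nat \<Rightarrow> bidx \<Rightarrow> 'k::comm_ring_1" where "Hy n w = mono n w 0 0 1"

text \<open>Comultiplication on basis elements: Delta is an algebra map, Delta(x^k g^j) =
  x^k g^j (x) x^k g^j and Delta(y) = y (x) g + 1 (x) y.\<close>
definition Delta_b :: "nat \<Rightarrow> nat \<Rightarrow> 'k::comm_ring_1 \<Rightarrow> bidx \<Rightarrow> bidx \<times> bidx \<Rightarrow> 'k" where
  "Delta_b n w \<gamma> s = (case s of (k, j, l) \<Rightarrow>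
     hmult2 n w \<gamma> (tens2 (mono n w k (int j) 0) (mono n w k (int j) 0))
       ((hmult2 n w \<gamma> (\<lambda>t. tens2 (Hy n w) (Hg n w) t + tens2 (Hone n w) (Hy n w) t) ^^ l)
          (tens2 (Hone n w) (Hone n w))))"

text \<open>Iterated comultiplication (Delta (x) id) o Delta on basis elements
  (again an algebra map): Delta2(y) = y (x) g (x) g + 1 (x) y (x) g + 1 (x) 1 (x) y.\<close>
definition Delta2_b :: "nat \<Rightarrow> nat \<Rightarrow> 'k::comm_ring_1 \<Rightarrow> bidx \<Rightarrow> bidx \<times> bidx \<times> bidx \<Rightarrow> 'k" where
  "Delta2_b n w \<gamma> s = (case s of (k, j, l) \<Rightarrow>
     hmult3 n w \<gamma> (tens3 (mono n w k (int j) 0) (mono n w k (int j) 0) (mono n w k (int j) 0))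
       ((hmult3 n w \<gamma> (\<lambda>t. tens3 (Hy n w) (Hg n w) (Hg n w) t + tens3 (Hone n w) (Hy n w) (Hg n w) t
                        + tens3 (Hone n w) (Hone n w) (Hy n w) t) ^^ l)
          (tens3 (Hone n w) (Hone n w) (Hone n w))))"

definition Delta2 :: "nat \<Rightarrow> nat \<Rightarrow> 'k::comm_ring_1 \<Rightarrow> (bidx \<Rightarrow> 'k) \<Rightarrow> bidx \<times> bidx \<times> bidx \<Rightarrow> 'k" where
  "Delta2 n w \<gamma> h = (\<lambda>t. \<Sum>s\<in>supp h. h s * Delta2_b n w \<gamma> s t)"

text \<open>Antipode on basis elements (anti-multiplicative):
  S(x^k g^j y^l) = S(y)^l x^(-k) g^(-j), with S(y) = - y g^(-1).\<close>
definition S_b :: "nat \<Rightarrow> nat \<Rightarrow> 'k::comm_ring_1 \<Rightarrow> bidx \<Rightarrow> bidx \<Rightarrow> 'k" where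
  "S_b n w \<gamma> s = (case s of (k, j, l) \<Rightarrow>
     hmult n w \<gamma> ((hmult n w \<gamma> (\<lambda>t. - hmult n w \<gamma> (Hy n w) (mono n w 0 (-1) 0) t) ^^ l) (Hone n w))
       (mono n w (-k) (- int j) 0))"

definition eps_b :: "bidx \<Rightarrow> 'k::zero_neq_one" where
  "eps_b s = (if snd (snd s) = 0 then 1 else 0)"

text \<open>V is the whole type 'v, a vector space over 'k with scalar multiplication sc.
  The H-action is given on basis elements by rho, and extended linearly to H.
  The coaction is delta, with delta v = sum_s (basis element s) (x) (delta v s).\<close>

definition hact :: "('k::field \<Rightarrow> 'v::ab_group_add \<Rightarrow> 'v) \<Rightarrow> (bidx \<Rightarrow> 'v \<Rightarrow> 'v) \<Rightarrow> (bidx \<Rightarrow> 'k) \<Rightarrow> 'v \<Rightarrow> 'v" where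
  "hact sc \<rho> h v = (\<Sum>s\<in>supp h. sc (h s) (\<rho> s v))"

definition is_Hmodule :: "nat \<Rightarrow> nat \<Rightarrow> 'k::field \<Rightarrow> ('k \<Rightarrow> 'v::ab_group_add \<Rightarrow> 'v) \<Rightarrow> (bidx \<Rightarrow> 'v \<Rightarrow> 'v) \<Rightarrow> bool" where
  "is_Hmodule n w \<gamma> sc \<rho> \<longleftrightarrow>
     (\<forall>s. Vector_Spaces.linear sc sc (\<rho> s)) \<and>
     (\<forall>v. hact sc \<rho> (Hone n w) v = v) \<and>
     (\<forall>f g v. isH n f \<longrightarrow> isH n g \<longrightarrow> hact sc \<rho> (hmult n w \<gamma> f g) v = hact sc \<rho> f (hact sc \<rho> g v))"

definition is_Hcomodule :: "nat \<Rightarrow> nat \<Rightarrow> 'k::field \<Rightarrow> ('k \<Rightarrow> 'v::ab_group_add \<Rightarrow> 'v) \<Rightarrow> ('v \<Rightarrow> bidx \<Rightarrow> 'v) \<Rightarrow> bool" where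
  "is_Hcomodule n w \<gamma> sc \<delta> \<longleftrightarrow>
     (\<forall>s. Vector_Spaces.linear sc sc (\<lambda>v. \<delta> v s)) \<and>
     (\<forall>v. finite (supp (\<delta> v)) \<and> (\<forall>s\<in>supp (\<delta> v). bvalid n s)) \<and>
     (\<forall>v. (\<Sum>s\<in>supp (\<delta> v). sc (eps_b s) (\<delta> v s)) = v) \<and>
     (\<forall>v t1 t2. (\<Sum>s\<in>supp (\<delta> v). sc (Delta_b n w \<gamma> s (t1, t2)) (\<delta> v s)) = \<delta> (\<delta> v t1) t2)"

text \<open>delta(h.v) = h1 v(-1) S(h3) (x) h2.v(0) for all h in H\<close>
definition is_YD :: "nat \<Rightarrow> nat \<Rightarrow> 'k::field \<Rightarrow> ('k \<Rightarrow> 'v::ab_group_add \<Rightarrow> 'v) \<Rightarrow> (bidx \<Rightarrow> 'v \<Rightarrow> 'v)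
    \<Rightarrow> ('v \<Rightarrow> bidx \<Rightarrow> 'v) \<Rightarrow> bool" where
  "is_YD n w \<gamma> sc \<rho> \<delta> \<longleftrightarrow>
     vector_space sc \<and> is_Hmodule n w \<gamma> sc \<rho> \<and> is_Hcomodule n w \<gamma> sc \<delta> \<and>
     (\<forall>h v. isH n h \<longrightarrow>
        \<delta> (hact sc \<rho> h v) =
        (\<lambda>t. \<Sum>(s1, s2, s3)\<in>supp (Delta2 n w \<gamma> h). \<Sum>s\<in>supp (\<delta> v).
            sc (Delta2 n w \<gamma> h (s1, s2, s3) *
                hmult n w \<gamma> (hmult n w \<gamma> (ebas s1) (ebas s)) (S_b n w \<gamma> s3) t)
               (\<rho> s2 (\<delta> v s))))"

definition is_YD_submodule :: "nat \<Rightarrow> ('k::field \<Rightarrow> 'v::ab_group_add \<Rightarrow> 'v) \<Rightarrow> (bidx \<Rightarrow> 'v \<Rightarrow> 'v)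
    \<Rightarrow> ('v \<Rightarrow> bidx \<Rightarrow> 'v) \<Rightarrow> 'v set \<Rightarrow> bool" where
  "is_YD_submodule n sc \<rho> \<delta> W \<longleftrightarrow>
     module.subspace sc W \<and>
     (\<forall>h v. isH n h \<longrightarrow> v \<in> W \<longrightarrow> hact sc \<rho> h v \<in> W) \<and>
     (\<forall>v\<in>W. \<forall>s. \<delta> v s \<in> W)"

definition simple_YD :: "nat \<Rightarrow> nat \<Rightarrow> 'k::field \<Rightarrow> ('k \<Rightarrow> 'v::ab_group_add \<Rightarrow> 'v) \<Rightarrow> (bidx \<Rightarrow> 'v \<Rightarrow> 'v)
    \<Rightarrow> ('v \<Rightarrow> bidx \<Rightarrow> 'v) \<Rightarrow> bool" where
  "simple_YD n w \<gamma> sc \<rho> \<delta> \<longleftrightarrow>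
     is_YD n w \<gamma> sc \<rho> \<delta> \<and> (UNIV :: 'v set) \<noteq> {0} \<and>
     (\<forall>W. is_YD_submodule n sc \<rho> \<delta> W \<longrightarrow> W = {0} \<or> W = UNIV)"

definition standard_type :: "nat \<Rightarrow> nat \<Rightarrow> ('k::field \<Rightarrow> 'v::ab_group_add \<Rightarrow> 'v) \<Rightarrow> (bidx \<Rightarrow> 'v \<Rightarrow> 'v)
    \<Rightarrow> ('v \<Rightarrow> bidx \<Rightarrow> 'v) \<Rightarrow> 'v \<Rightarrow> 'k \<Rightarrow> 'k \<Rightarrow> int \<Rightarrow> int \<Rightarrow> bool" where
  "standard_type n w sc \<rho> \<delta> v \<alpha> \<beta> r i \<longleftrightarrow>
     v \<noteq> 0 \<and> \<alpha> \<noteq> 0 \<and> \<beta> \<noteq> 0 \<and>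
     hact sc \<rho> (Hx n w) v = sc \<alpha> v \<and> hact sc \<rho> (Hg n w) v = sc \<beta> v \<and>
     \<delta> v = (\<lambda>t. sc (mono n w r i 0 t) v)"

text \<open>G(H) = {g^j x^k}: every group-like is x^r g^i for some integers r, i\<close>
definition standard :: "nat \<Rightarrow> nat \<Rightarrow> ('k::field \<Rightarrow> 'v::ab_group_add \<Rightarrow> 'v) \<Rightarrow> (bidx \<Rightarrow> 'v \<Rightarrow> 'v)
    \<Rightarrow> ('v \<Rightarrow> bidx \<Rightarrow> 'v) \<Rightarrow> 'v \<Rightarrow> bool" where
  "standard n w sc \<rho> \<delta> u \<longleftrightarrow> (\<exists>\<alpha> \<beta> r i. standard_type n w sc \<rho> \<delta> u \<alpha> \<beta> r i)"

definition primitive_root :: "nat \<Rightarrow> 'k::comm_ring_1 \<Rightarrow> bool" where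
  "primitive_root n \<gamma> \<longleftrightarrow> \<gamma> ^ n = 1 \<and> (\<forall>m. 0 < m \<and> m < n \<longrightarrow> \<gamma> ^ m \<noteq> 1)"

end

theory Submission
  imports Defs
begin

(* If u is standard with delta(u) = g (x) u for a group-like g, the Yetter-Drinfeld condition gives
   delta(h.u) = h(1) g S(h(3)) (x) h(2).u, so the cyclic module H.u is a Yetter-Drinfeld submodule
   and equals V by simplicity. Since x and g act on u by scalars, V is spanned by the y^l.u with
   0 <= l < n, and if u has type (alpha, beta, x^r g^i) then delta(y^l.u) lies in
   x^r g^(i-l) span{y^d : d <= l} (x) V. Projecting another standard element v onto its own
   group-like component kills all but one l, so v is a multiple of y^l.u, and symmetrically u is a
   multiple of y^m.v. Comparing group-likes gives g^(l+m) = 1; as g has infinite order in G(H)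
   (g^n = x^w with w > 0), l = m = 0. *)

section \<open>Basis elements of B(n, w, \<gamma>)\<close>

lemma supp_ebas: "supp (ebas a :: _ \<Rightarrow> 'k::zero_neq_one) = {a}"
  by (auto simp: supp_def ebas_def)

lemma supp_scaled_ebas: "supp (\<lambda>t. (c::'k::comm_ring_1) * ebas a t) = (if c = 0 then {} else {a})"
  by (auto simp: supp_def ebas_def)

lemma bvalid_iff [simp]: "bvalid n (a, b, c) \<longleftrightarrow> b < n \<and> c < n"
  by (simp add: bvalid_def)

lemma isH_ebas: "bvalid n s \<Longrightarrow> isH n (ebas s)"
  by (simp add: isH_def supp_ebas)

lemma mono_eq_ebas:
  "l < n \<Longrightarrow> mono n w k j l = ebas (k + int w * (j div int n), nat (j mod int n), l)"
  by (simp add: mono_def fun_eq_iff)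

lemma bprod_eq_ebas:
  assumes "c + l < n"
  shows "bprod n w \<gamma> (a, b, c) (k, j, l) = (\<lambda>t. \<gamma> ^ (c * j) *
    ebas (a + k + int w * ((int b + int j) div int n), nat ((int b + int j) mod int n), c + l) t)"
  using assms by (simp add: bprod_def mono_eq_ebas)

lemma bprod_one_right: "bvalid n s \<Longrightarrow> bprod n w \<gamma> s (0, 0, 0) = ebas s"
  by (cases s) (simp add: bprod_eq_ebas)

lemma bprod_one_left: "bvalid n s \<Longrightarrow> bprod n w \<gamma> (0, 0, 0) s = ebas s"
  by (cases s) (simp add: bprod_eq_ebas)

lemma hmult_scaled_ebas:
  "hmult n w \<gamma> (\<lambda>t. c * ebas a t) (\<lambda>t. d * ebas b t) = (\<lambda>t. c * d * bprod n w \<gamma> a b t)"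
  unfolding hmult_def supp_scaled_ebas by (auto simp: fun_eq_iff ebas_def)

lemma hmult_ebas: "hmult n w \<gamma> (ebas a) (ebas b) = bprod n w \<gamma> a b"
  using hmult_scaled_ebas[of n w \<gamma> 1 a 1 b] by simp

lemma Hone_eq: "0 < n \<Longrightarrow> Hone n w = ebas (0, 0, 0)"
  by (simp add: Hone_def mono_eq_ebas)

lemma Hx_eq: "0 < n \<Longrightarrow> Hx n w = ebas (1, 0, 0)"
  by (simp add: Hx_def mono_eq_ebas)

lemma Hg_eq: "1 < n \<Longrightarrow> Hg n w = ebas (0, 1, 0)"
  by (simp add: Hg_def mono_eq_ebas)

lemma Hy_eq: "1 < n \<Longrightarrow> Hy n w = ebas (0, 0, 1)"
  by (simp add: Hy_def mono_eq_ebas)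

lemma nat_minus_one_mod: "0 < n \<Longrightarrow> nat ((-1::int) mod int n) = n - 1"
  by (simp add: zmod_minus1 nat_diff_distrib)

lemma mono_g_inverse: "1 < n \<Longrightarrow> mono n w 0 (-1) 0 = ebas (- int w, n - 1, 0)"
  by (simp add: mono_eq_ebas div_eq_minus1 nat_minus_one_mod)

lemma sum_ebas_eq:
  assumes "finite (supp F)"
  shows "(\<Sum>x\<in>supp F. F x * ebas x t) = (F t :: 'k::comm_ring_1)"
proof -
  have "(\<Sum>x\<in>supp F. F x * ebas x t) = (\<Sum>x\<in>supp F. if x = t then F x else 0)"
    by (rule sum.cong) (auto simp: ebas_def)
  also have "\<dots> = F t"
    using assms by (auto simp: supp_def)
  finally show ?thesis .
qed

lemma tens3_ebas: "tens3 (ebas a) (ebas b) (ebas c) = (ebas (a, b, c) :: _ \<Rightarrow> 'k::comm_ring_1)"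
  by (auto simp: tens3_def ebas_def fun_eq_iff)

lemma hmult3_one_right:
  fixes F :: "bidx \<times> bidx \<times> bidx \<Rightarrow> 'k::comm_ring_1"
  assumes "finite (supp F)"
    and "\<And>s1 s2 s3. (s1, s2, s3) \<in> supp F \<Longrightarrow> bvalid n s1 \<and> bvalid n s2 \<and> bvalid n s3"
  shows "hmult3 n w \<gamma> F (ebas ((0, 0, 0), (0, 0, 0), (0, 0, 0))) = F"
proof (rule ext, clarify)
  fix t1 t2 t3
  have "hmult3 n w \<gamma> F (ebas ((0, 0, 0), (0, 0, 0), (0, 0, 0))) (t1, t2, t3)
      = (\<Sum>x\<in>supp F. F x * ebas x (t1, t2, t3))"
    unfolding hmult3_def supp_ebas
    using assms(2) by (auto simp: bprod_one_right ebas_def intro!: sum.cong)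
  then show "hmult3 n w \<gamma> F (ebas ((0, 0, 0), (0, 0, 0), (0, 0, 0))) (t1, t2, t3) = F (t1, t2, t3)"
    using sum_ebas_eq[OF assms(1)] by simp
qed

lemma hmult3_one_left:
  fixes F :: "bidx \<times> bidx \<times> bidx \<Rightarrow> 'k::comm_ring_1"
  assumes "finite (supp F)"
    and "\<And>s1 s2 s3. (s1, s2, s3) \<in> supp F \<Longrightarrow> bvalid n s1 \<and> bvalid n s2 \<and> bvalid n s3"
  shows "hmult3 n w \<gamma> (ebas ((0, 0, 0), (0, 0, 0), (0, 0, 0))) F = F"
proof (rule ext, clarify)
  fix t1 t2 t3
  have "hmult3 n w \<gamma> (ebas ((0, 0, 0), (0, 0, 0), (0, 0, 0))) F (t1, t2, t3)
      = (\<Sum>x\<in>supp F. F x * ebas x (t1, t2, t3))"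
    unfolding hmult3_def supp_ebas
    using assms(2) by (auto simp: bprod_one_left ebas_def intro!: sum.cong)
  then show "hmult3 n w \<gamma> (ebas ((0, 0, 0), (0, 0, 0), (0, 0, 0))) F (t1, t2, t3) = F (t1, t2, t3)"
    using sum_ebas_eq[OF assms(1)] by simp
qed

definition Delta2_y :: "bidx \<times> bidx \<times> bidx \<Rightarrow> 'k::comm_ring_1" where
  "Delta2_y = (\<lambda>t. ebas ((0, 0, 1), (0, 1, 0), (0, 1, 0)) t + ebas ((0, 0, 0), (0, 0, 1), (0, 1, 0)) t
      + ebas ((0, 0, 0), (0, 0, 0), (0, 0, 1)) t)"

lemma supp_Delta2_y:
  "supp (Delta2_y :: _ \<Rightarrow> 'k::comm_ring_1) \<subseteq>
     {((0, 0, 1), (0, 1, 0), (0, 1, 0)), ((0, 0, 0), (0, 0, 1), (0, 1, 0)), ((0, 0, 0), (0, 0, 0), (0, 0, 1))}"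
  by (auto simp: supp_def Delta2_y_def ebas_def)

lemma Delta2_Hy:
  assumes "1 < n"
  shows "Delta2 n w \<gamma> (Hy n w) = (Delta2_y :: _ \<Rightarrow> 'k::comm_ring_1)"
proof -
  have fin: "finite (supp (Delta2_y :: _ \<Rightarrow> 'k))"
    using supp_Delta2_y by (rule finite_subset) simp
  have valid: "bvalid n s1 \<and> bvalid n s2 \<and> bvalid n s3"
    if "(s1, s2, s3) \<in> supp (Delta2_y :: _ \<Rightarrow> 'k)" for s1 s2 s3
    using supp_Delta2_y that assms by auto
  have "(\<lambda>t. tens3 (Hy n w) (Hg n w) (Hg n w) t + tens3 (Hone n w) (Hy n w) (Hg n w) t
      + tens3 (Hone n w) (Hone n w) (Hy n w) t) = (Delta2_y :: _ \<Rightarrow> 'k)"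
    using assms by (simp add: Hy_eq Hg_eq Hone_eq tens3_ebas Delta2_y_def)
  then have "Delta2_b n w \<gamma> (0, 0, 1) = (Delta2_y :: _ \<Rightarrow> 'k)"
    using assms by (simp add: Delta2_b_def mono_eq_ebas tens3_ebas Hone_eq
        hmult3_one_right[OF fin valid] hmult3_one_left[OF fin valid])
  then show ?thesis
    unfolding Delta2_def Hy_eq[OF assms] supp_ebas by (simp add: ebas_def)
qed

lemma S_b_g:
  assumes "1 < n"
  shows "S_b n w \<gamma> (0, 1, 0) = (ebas (- int w, n - 1, 0) :: _ \<Rightarrow> 'k::comm_ring_1)"
  using assms by (simp add: S_b_def mono_g_inverse Hone_eq hmult_ebas bprod_one_left)

lemma S_b_y:
  assumes "1 < n"
  shows "S_b n w \<gamma> (0, 0, 1) = (\<lambda>t. - (\<gamma> ^ (n - 1)) * ebas (- int w, n - 1, 1) t :: 'k::comm_ring_1)"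
proof -
  have "int (n - 1) div int n = 0" "int (n - 1) mod int n = int (n - 1)"
    using assms by (simp_all add: div_pos_pos_trivial mod_pos_pos_trivial del: of_nat_diff)
  then have "(\<lambda>t. - hmult n w \<gamma> (Hy n w) (mono n w 0 (-1) 0) t)
      = (\<lambda>t. - (\<gamma> ^ (n - 1)) * ebas (- int w, n - 1, 1) t :: 'k)"
    using assms by (simp add: mono_g_inverse Hy_eq hmult_ebas bprod_eq_ebas del: of_nat_diff)
  then show ?thesis
    using assms hmult_scaled_ebas[of n w \<gamma> "- (\<gamma> ^ (n - 1))" _ 1 "(0, 0, 0)"]
    by (simp add: S_b_def mono_eq_ebas Hone_eq bprod_one_right)
qed

lemma Delta2_y_term:
  assumes "1 < n" and "(s1, s2, s3) \<in> supp (Delta2_y :: _ \<Rightarrow> 'k::comm_ring_1)"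
  obtains a b c where "s1 = (0, 0, a)" "a + b \<le> 1"
    and "S_b n w \<gamma> s3 = (\<lambda>t. c * ebas (- int w, n - 1, b) t :: 'k)"
proof -
  have g: "S_b n w \<gamma> (0, 1, 0) = (\<lambda>t. 1 * ebas (- int w, n - 1, 0) t :: 'k)"
    using S_b_g[OF assms(1)] by simp
  consider "s1 = (0, 0, 1)" "s3 = (0, 1, 0)" | "s1 = (0, 0, 0)" "s3 = (0, 1, 0)"
    | "s1 = (0, 0, 0)" "s3 = (0, 0, 1)"
    using supp_Delta2_y[THEN subsetD, OF assms(2)] by blast
  then show thesis
  proof cases
    case 1
    then show thesis using g by (intro that[of 1 0 1]) simp_all
  next
    case 2
    then show thesis using g by (intro that[of 0 0 1]) simp_all
  next
    case 3
    then show thesis using S_b_y[OF assms(1)] by (intro that[of 0 1 "- (\<gamma> ^ (n - 1))"]) simp_all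
  qed
qed

section \<open>Indices of group-like elements\<close>

text \<open>The basis index of x^a g^b, reduced to 0 \<le> b < n by g^n = x^w.\<close>

definition grouplike_idx :: "nat \<Rightarrow> nat \<Rightarrow> int \<Rightarrow> int \<Rightarrow> int \<times> nat" where
  "grouplike_idx n w a b = (a + int w * (b div int n), nat (b mod int n))"

lemma grouplike_idx_idem:
  "0 < n \<Longrightarrow> grouplike_idx n w (fst (grouplike_idx n w a b)) (int (snd (grouplike_idx n w a b)))
    = grouplike_idx n w a b"
  by (simp add: grouplike_idx_def)

lemma mono_grouplike:
  "0 < n \<Longrightarrow> mono n w a b 0 = ebas (fst (grouplike_idx n w a b), snd (grouplike_idx n w a b), 0)"
  by (simp add: mono_eq_ebas grouplike_idx_def)

lemma grouplike_idx_eq_iff: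
  assumes "0 < n"
  shows "grouplike_idx n w a b = grouplike_idx n w a' b' \<longleftrightarrow>
    a + int w * (b div int n) = a' + int w * (b' div int n) \<and> b mod int n = b' mod int n"
  using assms by (simp add: grouplike_idx_def eq_nat_nat_iff)

lemma grouplike_idx_shift:
  assumes "0 < n" and "grouplike_idx n w a b = grouplike_idx n w a' b'"
  shows "grouplike_idx n w a (b - m) = grouplike_idx n w a' (b' - m)"
proof -
  have split: "(c - m) div int n = (c mod int n - m) div int n + c div int n" for c
  proof -
    have "((c mod int n - m) + c div int n * int n) div int n = (c mod int n - m) div int n + c div int n"
      using assms by simp
    moreover have "(c mod int n - m) + c div int n * int n = c - m"
      by (simp add: algebra_simps)
    ultimately show ?thesis
      by simp
  qed
  have div: "a + int w * (b div int n) = a' + int w * (b' div int n)"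
    and mod: "b mod int n = b' mod int n"
    using assms grouplike_idx_eq_iff by blast+
  have "(b - m) mod int n = (b' - m) mod int n"
    using mod by (metis mod_diff_left_eq)
  moreover have "a + int w * ((b - m) div int n) = a' + int w * ((b' - m) div int n)"
    unfolding split[of b] split[of b'] mod using div by (simp add: algebra_simps)
  ultimately show ?thesis
    using assms(1) grouplike_idx_eq_iff by blast
qed

lemma grouplike_idx_pred:
  assumes "0 < n"
  shows "grouplike_idx n w (fst (grouplike_idx n w a b)) (int (snd (grouplike_idx n w a b)) - 1)
    = grouplike_idx n w a (b - 1)"
  using grouplike_idx_shift[OF assms grouplike_idx_idem[OF assms, symmetric], where m = 1] by simp

lemma grouplike_idx_shift_inj:
  assumes "0 < n" "l < n" "l' < n"
    and "grouplike_idx n w a (b - int l) = grouplike_idx n w a (b - int l')"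
  shows "l = l'"
proof -
  have "(b - int l) mod int n = (b - int l') mod int n"
    using assms(1,4) grouplike_idx_eq_iff by blast
  then have dvd: "int n dvd ((b - int l) - (b - int l'))"
    by (simp only: mod_eq_dvd_iff)
  show ?thesis
  proof (rule ccontr)
    assume "l \<noteq> l'"
    then have "\<bar>int n\<bar> \<le> \<bar>(b - int l) - (b - int l')\<bar>"
      using dvd by (intro dvd_imp_le_int) auto
    with assms(2,3) show False
      by linarith
  qed
qed

lemma grouplike_idx_eq_shift_iff:
  assumes "0 < n" "0 < w"
  shows "grouplike_idx n w a b = grouplike_idx n w a (b - m) \<longleftrightarrow> m = 0"
proof
  assume "grouplike_idx n w a b = grouplike_idx n w a (b - m)"
  then have "b div int n = (b - m) div int n" "b mod int n = (b - m) mod int n"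
    using assms grouplike_idx_eq_iff by auto
  then have "b div int n * int n + b mod int n = (b - m) div int n * int n + (b - m) mod int n"
    by simp
  then have "b = b - m"
    by simp
  then show "m = 0"
    by simp
qed simp

lemma grouplike_idx_shifts_cancel:
  assumes "0 < n" "0 < w"
    and "grouplike_idx n w a b = grouplike_idx n w a' (b' - int l)"
    and "grouplike_idx n w a' b' = grouplike_idx n w a (b - int m)"
  shows "l = 0"
proof -
  have "grouplike_idx n w a (b - int m) = grouplike_idx n w a' (b' - int (l + m))"
    using grouplike_idx_shift[OF assms(1,3), of "int m"] by (simp add: algebra_simps)
  then have "grouplike_idx n w a' b' = grouplike_idx n w a' (b' - int (l + m))"
    using assms(4) by simp
  then show ?thesis
    using grouplike_idx_eq_shift_iff[OF assms(1,2)] by simp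
qed

text \<open>y^a (x^k g^j y^d) (c g^(-1) y^b), with g^(-1) = x^(-w) g^(n-1).\<close>

lemma hmult_y_pow_ginv:
  assumes "j < n" "a + d + b < n"
  shows "hmult n w \<gamma> (hmult n w \<gamma> (ebas (0, 0, a)) (ebas (k, j, d))) (\<lambda>t. c * ebas (- int w, n - 1, b) t)
    = (\<lambda>t. \<gamma> ^ (a * j) * c * \<gamma> ^ ((a + d) * (n - 1)) *
        ebas (fst (grouplike_idx n w k (int j - 1)), snd (grouplike_idx n w k (int j - 1)), a + d + b) t)"
proof -
  have shift: "int j + int (n - 1) = (int j - 1) + int n"
    using assms by auto
  have "((int j - 1) + int n) div int n = (int j - 1) div int n + 1"
    using assms by (intro div_add_self2) simp
  then have idx: "(k + - int w + int w * ((int j + int (n - 1)) div int n),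
      nat ((int j + int (n - 1)) mod int n)) = grouplike_idx n w k (int j - 1)"
    unfolding shift mod_add_self2 by (simp add: grouplike_idx_def algebra_simps)
  have "hmult n w \<gamma> (ebas (0, 0, a)) (ebas (k, j, d)) = (\<lambda>t. \<gamma> ^ (a * j) * ebas (k, j, a + d) t)"
    using assms by (simp add: hmult_ebas bprod_eq_ebas)
  then show ?thesis
    using assms idx[symmetric] by (simp add: hmult_scaled_ebas bprod_eq_ebas mult.assoc)
qed

lemma isH_valid: "isH n f \<Longrightarrow> f t \<noteq> 0 \<Longrightarrow> bvalid n t"
  by (cases t) (auto simp: isH_def supp_def)

lemma isH_supp_subset: "isH n g \<Longrightarrow> supp f \<subseteq> supp g \<Longrightarrow> isH n f"
  unfolding isH_def by (meson finite_subset subsetD)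

lemma supp_mono:
  "supp (mono n w k j l :: _ \<Rightarrow> 'k::comm_ring_1) \<subseteq>
     (\<lambda>i. (k + int w * (j div int n) + int w * int i, nat (j mod int n), l mod n)) ` {..l div n}"
proof
  fix t
  assume "t \<in> supp (mono n w k j l :: _ \<Rightarrow> 'k)"
  then obtain i where "i \<in> {..l div n}" and "(-1) ^ i * of_nat ((l div n) choose i) *
      ebas (k + int w * (j div int n) + int w * int i, nat (j mod int n), l mod n) t \<noteq> (0::'k)"
    unfolding supp_def mono_def by (blast elim: sum.not_neutral_contains_not_neutral)
  then show "t \<in> (\<lambda>i. (k + int w * (j div int n) + int w * int i, nat (j mod int n), l mod n)) ` {..l div n}"
    by (auto simp: ebas_def split: if_splits)
qed

lemma isH_mono: "0 < n \<Longrightarrow> isH n (mono n w k j l :: _ \<Rightarrow> 'k::comm_ring_1)"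
  unfolding isH_def using supp_mono[of n w k j l, where 'k = 'k]
  by (auto simp: nat_less_iff intro: finite_subset)

lemma isH_bprod:
  assumes "0 < n"
  shows "isH n (bprod n w \<gamma> a b :: _ \<Rightarrow> 'k::comm_ring_1)"
proof -
  obtain a1 a2 a3 b1 b2 b3 where ab: "a = (a1, a2, a3)" "b = (b1, b2, b3)"
    by (cases a; cases b)
  have "supp (bprod n w \<gamma> a b :: _ \<Rightarrow> 'k) \<subseteq> supp (mono n w (a1 + b1) (int a2 + int b2) (a3 + b3) :: _ \<Rightarrow> 'k)"
    by (auto simp: ab bprod_def supp_def)
  then show ?thesis
    by (rule isH_supp_subset[OF isH_mono[OF assms]])
qed

lemma isH_hmult:
  assumes "0 < n" "isH n f" "isH n g"
  shows "isH n (hmult n w \<gamma> f g :: _ \<Rightarrow> 'k::comm_ring_1)"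
proof -
  let ?U = "\<Union>s\<in>supp f. \<Union>s'\<in>supp g. supp (bprod n w \<gamma> s s' :: _ \<Rightarrow> 'k)"
  have "supp (hmult n w \<gamma> f g) \<subseteq> ?U"
  proof
    fix t
    assume "t \<in> supp (hmult n w \<gamma> f g)"
    then obtain s s' where "s \<in> supp f" "s' \<in> supp g" "f s * g s' * bprod n w \<gamma> s s' t \<noteq> 0"
      unfolding supp_def hmult_def by (blast elim: sum.not_neutral_contains_not_neutral)
    then show "t \<in> ?U"
      unfolding supp_def by fastforce
  qed
  moreover have "finite ?U"
    using assms(2,3) isH_bprod[OF assms(1), where 'k = 'k] by (simp add: isH_def)
  moreover have "\<forall>t\<in>?U. bvalid n t"
    using isH_bprod[OF assms(1), where 'k = 'k] by (simp add: isH_def)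
  ultimately show ?thesis
    unfolding isH_def by (meson finite_subset subsetD)
qed

lemma isH_add:
  assumes "isH n f" "isH n g"
  shows "isH n (\<lambda>t. f t + g t :: 'k::comm_ring_1)"
proof -
  have "supp (\<lambda>t. f t + g t) \<subseteq> supp f \<union> supp g"
    by (auto simp: supp_def)
  with assms show ?thesis
    unfolding isH_def by (meson Un_iff finite_UnI finite_subset subsetD)
qed

lemma isH_scale: "isH n f \<Longrightarrow> isH n (\<lambda>t. c * f t :: 'k::comm_ring_1)"
  by (erule isH_supp_subset) (auto simp: supp_def)

lemma hmult3_valid_middle:
  assumes "0 < n" "hmult3 n w \<gamma> F G (s1, s2, s3) \<noteq> (0::'k::comm_ring_1)"
  shows "bvalid n s2"
proof (rule ccontr)
  assume "\<not> bvalid n s2"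
  then have "bprod n w \<gamma> x y s2 = (0::'k)" for x y
    using isH_valid[OF isH_bprod[OF assms(1)]] by blast
  then have "hmult3 n w \<gamma> F G (s1, s2, s3) = 0"
    unfolding hmult3_def by (simp add: split_def)
  with assms(2) show False
    by contradiction
qed

lemma Delta2_valid_middle:
  assumes "0 < n" "Delta2 n w \<gamma> h (s1, s2, s3) \<noteq> (0::'k::comm_ring_1)"
  shows "bvalid n s2"
proof (rule ccontr)
  assume "\<not> bvalid n s2"
  then have "hmult3 n w \<gamma> F G (s1, s2, s3) = (0::'k)" for F G
    using hmult3_valid_middle[OF assms(1)] by blast
  then have "Delta2_b n w \<gamma> s (s1, s2, s3) = (0::'k)" for s
    by (cases s) (simp add: Delta2_b_def)
  then have "Delta2 n w \<gamma> h (s1, s2, s3) = 0"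
    by (simp add: Delta2_def)
  with assms(2) show False
    by contradiction
qed

section \<open>Yetter-Drinfeld modules over B(n, w, \<gamma>)\<close>

locale yd_module =
  fixes n w :: nat and \<gamma> :: "'k::field" and sc :: "'k \<Rightarrow> 'v::ab_group_add \<Rightarrow> 'v"
    and \<rho> :: "bidx \<Rightarrow> 'v \<Rightarrow> 'v" and \<delta> :: "'v \<Rightarrow> bidx \<Rightarrow> 'v"
  assumes n_pos: "0 < n" and gamma_nonzero: "\<gamma> \<noteq> 0" and YD: "is_YD n w \<gamma> sc \<rho> \<delta>"
begin

sublocale vector_space sc
  using YD by (simp add: is_YD_def)

lemma Hmodule: "is_Hmodule n w \<gamma> sc \<rho>"
  using YD by (simp add: is_YD_def)

lemma Hcomodule: "is_Hcomodule n w \<gamma> sc \<delta>"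
  using YD by (simp add: is_YD_def)

lemma coaction_hact:
  "isH n h \<Longrightarrow> \<delta> (hact sc \<rho> h v) =
    (\<lambda>t. \<Sum>(s1, s2, s3)\<in>supp (Delta2 n w \<gamma> h). \<Sum>s\<in>supp (\<delta> v).
      sc (Delta2 n w \<gamma> h (s1, s2, s3) * hmult n w \<gamma> (hmult n w \<gamma> (ebas s1) (ebas s)) (S_b n w \<gamma> s3) t)
        (\<rho> s2 (\<delta> v s)))"
  using YD by (simp add: is_YD_def)

lemma rho_hom: "module_hom sc sc (\<rho> s)"
  using Hmodule by (cases s) (simp add: is_Hmodule_def Vector_Spaces.linear_iff_module_hom)

lemma delta_hom: "module_hom sc sc (\<lambda>v. \<delta> v s)"
  using Hcomodule by (cases s) (simp add: is_Hcomodule_def Vector_Spaces.linear_iff_module_hom)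

lemma rho_scale: "\<rho> s (sc c x) = sc c (\<rho> s x)"
  using module_hom.scale[OF rho_hom] .

lemma delta_scale: "\<delta> (sc c x) s = sc c (\<delta> x s)"
  using module_hom.scale[OF delta_hom] .

lemma delta_sum: "\<delta> (sum f A) s = (\<Sum>a\<in>A. \<delta> (f a) s)"
  using module_hom.sum[OF delta_hom] .

lemma delta_valid: "s \<in> supp (\<delta> v) \<Longrightarrow> bvalid n s"
  using Hcomodule by (simp add: is_Hcomodule_def)

lemma hact_ebas: "hact sc \<rho> (ebas s) x = \<rho> s x"
  unfolding hact_def supp_ebas by (simp add: ebas_def)

lemma hact_scaled_ebas: "hact sc \<rho> (\<lambda>t. c * ebas s t) x = sc c (\<rho> s x)"
  unfolding hact_def supp_scaled_ebas by (simp add: ebas_def)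

lemma rho_one: "\<rho> (0, 0, 0) x = x"
  using Hmodule n_pos by (simp add: is_Hmodule_def Hone_eq hact_ebas)

lemma rho_rho:
  assumes "jb < n" "ja < n" "la + lb < n"
  shows "\<rho> (ka, ja, la) (\<rho> (kb, jb, lb) x) = sc (\<gamma> ^ (la * jb))
    (\<rho> (ka + kb + int w * ((int ja + int jb) div int n), nat ((int ja + int jb) mod int n), la + lb) x)"
proof -
  have "isH n (ebas (ka, ja, la))" "isH n (ebas (kb, jb, lb))"
    using assms by (simp_all add: isH_ebas)
  then have "\<rho> (ka, ja, la) (\<rho> (kb, jb, lb) x) = hact sc \<rho> (bprod n w \<gamma> (ka, ja, la) (kb, jb, lb)) x"
    using Hmodule unfolding is_Hmodule_def by (metis hact_ebas hmult_ebas)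
  then show ?thesis
    using assms by (simp add: bprod_eq_ebas hact_scaled_ebas)
qed

lemma rho_y_Suc: "l + 1 < n \<Longrightarrow> \<rho> (0, 0, l + 1) x = \<rho> (0, 0, 1) (\<rho> (0, 0, l) x)"
  using rho_rho[where ka = 0 and ja = 0 and la = 1 and kb = 0 and jb = 0 and lb = l] by simp

lemma hact_superset:
  assumes "finite A" "supp f \<subseteq> A"
  shows "hact sc \<rho> f x = (\<Sum>s\<in>A. sc (f s) (\<rho> s x))"
  unfolding hact_def by (rule sum.mono_neutral_left) (use assms in \<open>auto simp: supp_def\<close>)

lemma hact_add:
  assumes "isH n f" "isH n g"
  shows "hact sc \<rho> (\<lambda>t. f t + g t) x = hact sc \<rho> f x + hact sc \<rho> g x"
proof -
  have fin: "finite (supp f \<union> supp g)"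
    using assms by (simp add: isH_def)
  have "hact sc \<rho> (\<lambda>t. f t + g t) x = (\<Sum>s\<in>supp f \<union> supp g. sc (f s + g s) (\<rho> s x))"
    by (rule hact_superset[OF fin]) (auto simp: supp_def)
  also have "\<dots> = hact sc \<rho> f x + hact sc \<rho> g x"
    by (simp add: hact_superset[OF fin] scale_left_distrib sum.distrib)
  finally show ?thesis .
qed

lemma hact_scale:
  assumes "isH n f"
  shows "hact sc \<rho> (\<lambda>t. c * f t) x = sc c (hact sc \<rho> f x)"
proof -
  have "hact sc \<rho> (\<lambda>t. c * f t) x = (\<Sum>s\<in>supp f. sc (c * f s) (\<rho> s x))"
    using assms by (intro hact_superset) (auto simp: isH_def supp_def)
  then show ?thesis
    by (simp add: hact_def scale_sum_right)
qed

definition cyclic_submodule :: "'v \<Rightarrow> 'v set" where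
  "cyclic_submodule u = {hact sc \<rho> h u | h :: bidx \<Rightarrow> 'k. isH n h}"

lemma subspace_cyclic_submodule: "subspace (cyclic_submodule u)"
proof (rule subspaceI)
  have "hact sc \<rho> (\<lambda>t. 0) u = 0"
    by (simp add: hact_def supp_def)
  then show "0 \<in> cyclic_submodule u"
    unfolding cyclic_submodule_def by (force simp: isH_def supp_def)
next
  fix x y
  assume "x \<in> cyclic_submodule u" "y \<in> cyclic_submodule u"
  then obtain f g where "isH n f" "isH n g" "x = hact sc \<rho> f u" "y = hact sc \<rho> g u"
    unfolding cyclic_submodule_def by blast
  then have "x + y = hact sc \<rho> (\<lambda>t. f t + g t) u" "isH n (\<lambda>t. f t + g t)"
    by (simp_all add: hact_add isH_add)
  then show "x + y \<in> cyclic_submodule u"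
    unfolding cyclic_submodule_def by blast
next
  fix c x
  assume "x \<in> cyclic_submodule u"
  then obtain f where "isH n f" "x = hact sc \<rho> f u"
    unfolding cyclic_submodule_def by blast
  then have "sc c x = hact sc \<rho> (\<lambda>t. c * f t) u" "isH n (\<lambda>t. c * f t)"
    by (simp_all add: hact_scale isH_scale)
  then show "sc c x \<in> cyclic_submodule u"
    unfolding cyclic_submodule_def by blast
qed

definition coaction_bounded :: "int \<times> nat \<Rightarrow> nat \<Rightarrow> 'v \<Rightarrow> bool" where
  "coaction_bounded q l z \<longleftrightarrow> (\<forall>t. \<delta> z t \<noteq> 0 \<longrightarrow> (fst t, fst (snd t)) = q \<and> snd (snd t) \<le> l)"

text \<open>By the Yetter-Drinfeld condition,
  \<delta>(y.z) = y z(-1) g^-1 \<otimes> g.z(0) + z(-1) g^-1 \<otimes> y.z(0) - z(-1) y g^-1 \<otimes> z(0):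
  every term moves the group-like part by g^-1 and raises the y-degree by at most one.\<close>

lemma coaction_y_term_support:
  assumes l: "l + 1 < n" and z: "coaction_bounded q l z"
    and s123: "(s1, s2, s3) \<in> supp (Delta2_y :: _ \<Rightarrow> 'k)" and s: "s \<in> supp (\<delta> z)"
    and nonzero: "hmult n w \<gamma> (hmult n w \<gamma> (ebas s1) (ebas s)) (S_b n w \<gamma> s3) t \<noteq> 0"
  shows "(fst t, fst (snd t)) = grouplike_idx n w (fst q) (int (snd q) - 1) \<and> snd (snd t) \<le> l + 1"
proof -
  have n1: "1 < n"
    using l by simp
  obtain a b c where s1: "s1 = (0, 0, a)" and ab: "a + b \<le> 1"
    and s3: "S_b n w \<gamma> s3 = (\<lambda>t. c * ebas (- int w, n - 1, b) t)"
    using Delta2_y_term[OF n1 s123] .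
  obtain d where s_eq: "s = (fst q, snd q, d)" and d: "d \<le> l"
    using z s unfolding coaction_bounded_def supp_def by (cases s) fastforce
  have "snd q < n"
    using delta_valid[OF s] s_eq by simp
  then show ?thesis
    using hmult_y_pow_ginv[of "snd q" n a d b w \<gamma> "fst q" c] nonzero ab d l
    by (auto simp: s1 s3 s_eq ebas_def split: if_splits)
qed

lemma coaction_bounded_y:
  assumes l: "l + 1 < n" and z: "coaction_bounded q l z"
  shows "coaction_bounded (grouplike_idx n w (fst q) (int (snd q) - 1)) (l + 1) (\<rho> (0, 0, 1) z)"
  unfolding coaction_bounded_def
proof (intro allI impI)
  fix t
  assume nonzero: "\<delta> (\<rho> (0, 0, 1) z) t \<noteq> 0"
  have n1: "1 < n"
    using l by simp
  have "Delta2 n w \<gamma> (ebas (0, 0, 1)) = (Delta2_y :: _ \<Rightarrow> 'k)"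
    using Delta2_Hy[OF n1] by (simp add: Hy_eq[OF n1])
  then have expand: "\<delta> (\<rho> (0, 0, 1) z) t = (\<Sum>(s1, s2, s3)\<in>supp (Delta2_y :: _ \<Rightarrow> 'k). \<Sum>s\<in>supp (\<delta> z).
      sc (Delta2_y (s1, s2, s3) * hmult n w \<gamma> (hmult n w \<gamma> (ebas s1) (ebas s)) (S_b n w \<gamma> s3) t)
        (\<rho> s2 (\<delta> z s)))"
    using coaction_hact[OF isH_ebas, of "(0, 0, 1)" z] n1 by (simp add: hact_ebas)
  show "(fst t, fst (snd t)) = grouplike_idx n w (fst q) (int (snd q) - 1) \<and> snd (snd t) \<le> l + 1"
  proof (rule ccontr)
    assume wrong: "\<not> ?thesis"
    have term_zero: "hmult n w \<gamma> (hmult n w \<gamma> (ebas s1) (ebas s)) (S_b n w \<gamma> s3) t = 0"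
      if "(s1, s2, s3) \<in> supp (Delta2_y :: _ \<Rightarrow> 'k)" "s \<in> supp (\<delta> z)" for s1 s2 s3 s
      using coaction_y_term_support[OF l z that] wrong by blast
    have "\<delta> (\<rho> (0, 0, 1) z) t = 0"
      unfolding expand by (rule sum.neutral, clarify, rule sum.neutral) (simp add: term_zero)
    with nonzero show False
      by contradiction
  qed
qed

lemma coaction_bounded_y_pow:
  assumes u: "coaction_bounded (grouplike_idx n w r i) 0 u" and "l < n"
  shows "coaction_bounded (grouplike_idx n w r (i - int l)) l (\<rho> (0, 0, l) u)"
  using \<open>l < n\<close>
proof (induction l)
  case 0
  then show ?case
    using u by (simp add: rho_one)
next
  case (Suc l)
  have "coaction_bounded (grouplike_idx n w (fst (grouplike_idx n w r (i - int l)))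
      (int (snd (grouplike_idx n w r (i - int l))) - 1)) (l + 1) (\<rho> (0, 0, 1) (\<rho> (0, 0, l) u))"
    using Suc by (intro coaction_bounded_y) auto
  then show ?case
    using Suc.prems rho_y_Suc[of l u] by (simp add: grouplike_idx_pred[OF n_pos] algebra_simps)
qed

lemma coaction_bounded_component:
  assumes "coaction_bounded q l z"
  shows "\<delta> z (fst q', snd q', 0) = (if q' = q then z else 0)"
proof (cases "q' = q")
  case True
  have "z = (\<Sum>s\<in>supp (\<delta> z). sc (eps_b s) (\<delta> z s))"
    using Hcomodule by (simp add: is_Hcomodule_def)
  also have "\<dots> = (\<Sum>s\<in>supp (\<delta> z). if s = (fst q, snd q, 0) then \<delta> z s else 0)"
  proof (rule sum.cong[OF refl])
    fix s
    assume "s \<in> supp (\<delta> z)"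
    then have "(fst s, fst (snd s)) = q"
      using assms by (cases s) (auto simp: coaction_bounded_def supp_def)
    then show "sc (eps_b s) (\<delta> z s) = (if s = (fst q, snd q, 0) then \<delta> z s else 0)"
      by (cases s) (auto simp: eps_b_def)
  qed
  also have "\<dots> = \<delta> z (fst q, snd q, 0)"
    using Hcomodule by (auto simp: is_Hcomodule_def supp_def)
  finally show ?thesis
    using True by simp
next
  case False
  then show ?thesis
    using assms by (cases q') (auto simp: coaction_bounded_def)
qed

lemma standard_coaction_bounded:
  "standard_type n w sc \<rho> \<delta> u \<alpha> \<beta> r i \<Longrightarrow> coaction_bounded (grouplike_idx n w r i) 0 u"
  using n_pos unfolding standard_type_def coaction_bounded_def
  by (auto simp: mono_grouplike ebas_def split: if_splits)

lemma standard_y_pow_component: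
  assumes "standard_type n w sc \<rho> \<delta> u \<alpha> \<beta> r i" "l < n"
  shows "\<delta> (\<rho> (0, 0, l) u) (fst q, snd q, 0) =
    (if q = grouplike_idx n w r (i - int l) then \<rho> (0, 0, l) u else 0)"
  using coaction_bounded_component[OF coaction_bounded_y_pow[OF standard_coaction_bounded]] assms
  by blast

lemma standard_x_pow_action:
  assumes u: "standard_type n w sc \<rho> \<delta> u \<alpha> \<beta> r i"
  shows "\<exists>c. \<rho> (k, 0, 0) u = sc c u"
proof -
  have x: "\<rho> (1, 0, 0) u = sc \<alpha> u" and "\<alpha> \<noteq> 0"
    using u n_pos by (simp_all add: standard_type_def Hx_eq hact_ebas)
  have up: "\<rho> (k + 1, 0, 0) z = \<rho> (1, 0, 0) (\<rho> (k, 0, 0) z)" for k z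
    using rho_rho[where ka = 1 and ja = 0 and la = 0 and kb = k and jb = 0 and lb = 0] n_pos
    by (simp add: add.commute)
  have down: "\<rho> (k - 1, 0, 0) (\<rho> (1, 0, 0) z) = \<rho> (k, 0, 0) z" for k z
    using rho_rho[where ka = "k - 1" and ja = 0 and la = 0 and kb = 1 and jb = 0 and lb = 0] n_pos
    by simp
  show ?thesis
  proof (induction k rule: int_induct[where k = 0])
    case base
    then show ?case
      using rho_one by (metis scale_one)
  next
    case (step1 k)
    then show ?case
      using up x by (metis rho_scale scale_scale)
  next
    case (step2 k)
    then obtain c where "\<rho> (k, 0, 0) u = sc c u"
      by blast
    then have "sc \<alpha> (\<rho> (k - 1, 0, 0) u) = sc c u"
      using down[of k u] x by (simp add: rho_scale)
    then have "\<rho> (k - 1, 0, 0) u = sc (inverse \<alpha> * c) u"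
      using \<open>\<alpha> \<noteq> 0\<close> by (metis scale_scale scale_one left_inverse)
    then show ?case
      by blast
  qed
qed

lemma standard_g_pow_action:
  assumes u: "standard_type n w sc \<rho> \<delta> u \<alpha> \<beta> r i" and "j < n"
  shows "\<exists>c. \<rho> (0, j, 0) u = sc c u"
  using \<open>j < n\<close>
proof (induction j)
  case 0
  then show ?case
    using rho_one by (metis scale_one)
next
  case (Suc j)
  then have g: "\<rho> (0, 1, 0) u = sc \<beta> u"
    using u by (simp add: standard_type_def Hg_eq hact_ebas)
  have "\<rho> (0, 1, 0) (\<rho> (0, j, 0) u) = \<rho> (0, Suc j, 0) u"
    using rho_rho[where ka = 0 and ja = 1 and la = 0 and kb = 0 and jb = j and lb = 0] Suc.prems
    by (simp add: nat_add_distrib add.commute)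
  moreover obtain c where "\<rho> (0, j, 0) u = sc c u"
    using Suc by auto
  ultimately show ?case
    using g by (metis rho_scale scale_scale)
qed

text \<open>y^l x^k g^j = \<gamma>^(l j) x^k g^j y^l, and x and g act on u by scalars.\<close>

lemma standard_basis_action:
  assumes u: "standard_type n w sc \<rho> \<delta> u \<alpha> \<beta> r i" and "bvalid n (k, j, l)"
  shows "\<exists>c. \<rho> (k, j, l) u = sc c (\<rho> (0, 0, l) u)"
proof -
  have j: "j < n" and l: "l < n"
    using assms(2) by simp_all
  obtain c1 where c1: "\<rho> (k, 0, 0) u = sc c1 u"
    using standard_x_pow_action[OF u] by blast
  obtain c2 where c2: "\<rho> (0, j, 0) u = sc c2 u"
    using standard_g_pow_action[OF u j] by blast
  have "\<rho> (k, j, 0) u = \<rho> (k, 0, 0) (\<rho> (0, j, 0) u)"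
    using rho_rho[where ka = k and ja = 0 and la = 0 and kb = 0 and jb = j and lb = 0] j n_pos
    by simp
  then have "\<rho> (k, j, 0) u = sc (c2 * c1) u"
    using c1 c2 by (simp add: rho_scale)
  moreover have "\<rho> (0, 0, l) (\<rho> (k, j, 0) u) = sc (\<gamma> ^ (l * j)) (\<rho> (k, j, l) u)"
    using rho_rho[where ka = 0 and ja = 0 and la = l and kb = k and jb = j and lb = 0] j l n_pos
    by simp
  ultimately have "sc (\<gamma> ^ (l * j)) (\<rho> (k, j, l) u) = sc (c2 * c1) (\<rho> (0, 0, l) u)"
    by (simp add: rho_scale)
  then have "\<rho> (k, j, l) u = sc (inverse (\<gamma> ^ (l * j)) * (c2 * c1)) (\<rho> (0, 0, l) u)"
    using gamma_nonzero by (metis scale_scale scale_one left_inverse power_not_zero)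
  then show ?thesis
    by blast
qed

lemma hact_cyclic_submodule:
  assumes "isH n h" "x \<in> cyclic_submodule u"
  shows "hact sc \<rho> h x \<in> cyclic_submodule u"
proof -
  obtain f where "isH n f" "hact sc \<rho> h x = hact sc \<rho> (hmult n w \<gamma> h f) u"
    using assms Hmodule unfolding cyclic_submodule_def is_Hmodule_def by auto
  then show ?thesis
    unfolding cyclic_submodule_def using isH_hmult[OF n_pos \<open>isH n h\<close>] by blast
qed

lemma coaction_cyclic_submodule:
  assumes u: "standard_type n w sc \<rho> \<delta> u \<alpha> \<beta> r i" and "x \<in> cyclic_submodule u"
  shows "\<delta> x s \<in> cyclic_submodule u"
proof -
  obtain f where f: "isH n f" "x = hact sc \<rho> f u"
    using assms(2) unfolding cyclic_submodule_def by blast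
  have rho_in: "\<rho> s' u \<in> cyclic_submodule u" if "bvalid n s'" for s'
  proof -
    have "\<rho> s' u = hact sc \<rho> (ebas s') u"
      by (simp add: hact_ebas)
    with isH_ebas[OF that] show ?thesis
      unfolding cyclic_submodule_def by blast
  qed
  have "\<delta> x s = (\<Sum>(s1, s2, s3)\<in>supp (Delta2 n w \<gamma> f). \<Sum>s'\<in>supp (\<delta> u).
      sc (Delta2 n w \<gamma> f (s1, s2, s3) * hmult n w \<gamma> (hmult n w \<gamma> (ebas s1) (ebas s')) (S_b n w \<gamma> s3) s)
        (\<rho> s2 (\<delta> u s')))"
    using coaction_hact[OF f(1)] f(2) by simp
  also have "\<dots> \<in> cyclic_submodule u"
  proof (intro subspace_sum[OF subspace_cyclic_submodule], clarify,
      intro subspace_sum[OF subspace_cyclic_submodule])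
    fix s1 s2 s3 s'
    assume "(s1, s2, s3) \<in> supp (Delta2 n w \<gamma> f)"
    then have "bvalid n s2"
      using Delta2_valid_middle[OF n_pos] by (simp add: supp_def)
    moreover have "\<rho> s2 (\<delta> u s') = sc (mono n w r i 0 s') (\<rho> s2 u)"
      using u by (simp add: standard_type_def rho_scale)
    ultimately show "sc (Delta2 n w \<gamma> f (s1, s2, s3) *
        hmult n w \<gamma> (hmult n w \<gamma> (ebas s1) (ebas s')) (S_b n w \<gamma> s3) s) (\<rho> s2 (\<delta> u s'))
      \<in> cyclic_submodule u"
      by (simp only:) (intro subspace_scale[OF subspace_cyclic_submodule] rho_in)
  qed
  finally show ?thesis .
qed

lemma cyclic_submodule_YD:
  "standard_type n w sc \<rho> \<delta> u \<alpha> \<beta> r i \<Longrightarrow> is_YD_submodule n sc \<rho> \<delta> (cyclic_submodule u)"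
  unfolding is_YD_submodule_def
  by (blast intro: subspace_cyclic_submodule hact_cyclic_submodule coaction_cyclic_submodule)

lemma cyclic_submodule_UNIV:
  assumes simple: "simple_YD n w \<gamma> sc \<rho> \<delta>"
    and u: "standard_type n w sc \<rho> \<delta> u \<alpha> \<beta> r i"
  shows "cyclic_submodule u = UNIV"
proof -
  have "u = hact sc \<rho> (ebas (0, 0, 0)) u" "isH n (ebas (0, 0, 0))"
    using n_pos by (simp_all add: hact_ebas rho_one isH_ebas)
  then have "u \<in> cyclic_submodule u"
    unfolding cyclic_submodule_def by blast
  moreover have "u \<noteq> 0"
    using u by (simp add: standard_type_def)
  ultimately show ?thesis
    using simple cyclic_submodule_YD[OF u] unfolding simple_YD_def by blast
qed

lemma span_y_powers:
  assumes simple: "simple_YD n w \<gamma> sc \<rho> \<delta>"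
    and u: "standard_type n w sc \<rho> \<delta> u \<alpha> \<beta> r i"
  shows "\<exists>c. x = (\<Sum>l<n. sc (c l) (\<rho> (0, 0, l) u))"
proof -
  obtain h where h: "isH n h" and x: "x = hact sc \<rho> h u"
    using cyclic_submodule_UNIV[OF simple u] unfolding cyclic_submodule_def by blast
  define L where "L s = snd (snd s)" for s :: bidx
  have "\<exists>c. \<rho> s u = sc c (\<rho> (0, 0, L s) u)" if "s \<in> supp h" for s
    using standard_basis_action[OF u] isH_valid[OF h] that
    by (cases s) (auto simp: L_def supp_def simp del: bvalid_iff)
  then obtain c where c: "\<And>s. s \<in> supp h \<Longrightarrow> \<rho> s u = sc (c s) (\<rho> (0, 0, L s) u)"
    by metis
  have fin: "finite (supp h)" and L: "L ` supp h \<subseteq> {..<n}"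
    using h by (auto simp: isH_def L_def bvalid_def)
  have "x = (\<Sum>s\<in>supp h. sc (h s * c s) (\<rho> (0, 0, L s) u))"
    unfolding x hact_def by (rule sum.cong) (simp_all add: c)
  also have "\<dots> = (\<Sum>l<n. \<Sum>s\<in>{s \<in> supp h. L s = l}. sc (h s * c s) (\<rho> (0, 0, L s) u))"
    by (rule sum.group[OF fin finite_lessThan L, symmetric])
  also have "\<dots> = (\<Sum>l<n. sc (\<Sum>s\<in>{s \<in> supp h. L s = l}. h s * c s) (\<rho> (0, 0, l) u))"
    by (auto simp: scale_sum_left intro!: sum.cong)
  finally show ?thesis
    by (intro exI[of _ "\<lambda>l. \<Sum>s\<in>{s \<in> supp h. L s = l}. h s * c s"])
qed

lemma standard_project_y_powers:
  assumes u: "standard_type n w sc \<rho> \<delta> u \<alpha>' \<beta>' r' i'"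
    and v: "standard_type n w sc \<rho> \<delta> v \<alpha> \<beta> r i"
    and v_span: "v = (\<Sum>l<n. sc (c l) (\<rho> (0, 0, l) u))"
  shows "v = (\<Sum>l<n. if grouplike_idx n w r i = grouplike_idx n w r' (i' - int l)
      then sc (c l) (\<rho> (0, 0, l) u) else 0)"
proof -
  let ?q = "grouplike_idx n w r i"
  have "v = \<delta> v (fst ?q, snd ?q, 0)"
    using coaction_bounded_component[OF standard_coaction_bounded[OF v]] by simp
  also have "\<dots> = (\<Sum>l<n. sc (c l) (\<delta> (\<rho> (0, 0, l) u) (fst ?q, snd ?q, 0)))"
    by (subst v_span) (simp add: delta_sum delta_scale)
  also have "\<dots> = (\<Sum>l<n. if ?q = grouplike_idx n w r' (i' - int l) then sc (c l) (\<rho> (0, 0, l) u) else 0)"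
    by (intro sum.cong refl) (simp add: standard_y_pow_component[OF u])
  finally show ?thesis .
qed

lemma standard_eq_scaled_y_pow:
  assumes simple: "simple_YD n w \<gamma> sc \<rho> \<delta>"
    and u: "standard_type n w sc \<rho> \<delta> u \<alpha>' \<beta>' r' i'"
    and v: "standard_type n w sc \<rho> \<delta> v \<alpha> \<beta> r i"
  obtains l c where "l < n" "v = sc c (\<rho> (0, 0, l) u)"
    and "grouplike_idx n w r i = grouplike_idx n w r' (i' - int l)"
proof -
  let ?P = "\<lambda>l. grouplike_idx n w r i = grouplike_idx n w r' (i' - int l)"
  obtain c where "v = (\<Sum>l<n. sc (c l) (\<rho> (0, 0, l) u))"
    using span_y_powers[OF simple u] by blast
  then have v_sum: "v = (\<Sum>l<n. if ?P l then sc (c l) (\<rho> (0, 0, l) u) else 0)"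
    by (rule standard_project_y_powers[OF u v])
  have "\<exists>l<n. ?P l"
  proof (rule ccontr)
    assume "\<not> (\<exists>l<n. ?P l)"
    then have "v = 0"
      unfolding v_sum by (intro sum.neutral) auto
    with v show False
      by (simp add: standard_type_def)
  qed
  then obtain l0 where l0: "l0 < n" "?P l0"
    by blast
  have unique: "?P l \<longleftrightarrow> l = l0" if "l < n" for l
  proof
    assume "?P l"
    from this l0(2) have "grouplike_idx n w r' (i' - int l) = grouplike_idx n w r' (i' - int l0)"
      by (rule trans[OF sym])
    then show "l = l0"
      by (rule grouplike_idx_shift_inj[OF n_pos that l0(1)])
  qed (use l0(2) in simp)
  have "v = (\<Sum>l<n. if l = l0 then sc (c l) (\<rho> (0, 0, l) u) else 0)"
    unfolding v_sum by (intro sum.cong refl) (simp only: unique lessThan_iff)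
  then have "v = sc (c l0) (\<rho> (0, 0, l0) u)"
    using l0(1) by simp
  then show thesis
    by (rule that[OF l0(1) _ l0(2)])
qed

end

lemma yd_module_if_simple_YD:
  assumes "0 < n" "primitive_root n \<gamma>" "simple_YD n w \<gamma> sc \<rho> \<delta>"
  shows "yd_module n w \<gamma> sc \<rho> \<delta>"
proof
  show "0 < n"
    by (fact assms(1))
  show "\<gamma> \<noteq> 0"
    using assms(1,2) by (auto simp: primitive_root_def power_0_left)
  show "is_YD n w \<gamma> sc \<rho> \<delta>"
    using assms(3) by (simp add: simple_YD_def)
qed

theorem corollary3p20:
  fixes n w p :: nat and \<gamma> :: "'k::{alg_closed_field, field_char_0}"
    and sc :: "'k \<Rightarrow> 'v::ab_group_add \<Rightarrow> 'v"
    and \<rho> :: "bidx \<Rightarrow> 'v \<Rightarrow> 'v" and \<delta> :: "'v \<Rightarrow> bidx \<Rightarrow> 'v"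
    and v u :: 'v and \<alpha> \<beta> :: 'k and r i :: int
  assumes "0 < n" and "0 < w" and "primitive_root n \<gamma>"
    and "simple_YD n w \<gamma> sc \<rho> \<delta>"
    and "vector_space.dim sc (UNIV :: 'v set) = p + 1"
    and "standard_type n w sc \<rho> \<delta> v \<alpha> \<beta> r i"
    and "standard n w sc \<rho> \<delta> u"
  shows "\<exists>c. c \<noteq> 0 \<and> u = sc c v"
proof -
  interpret yd_module n w \<gamma> sc \<rho> \<delta>
    by (rule yd_module_if_simple_YD[OF assms(1,3,4)])
  obtain \<alpha>' \<beta>' r' i' where u: "standard_type n w sc \<rho> \<delta> u \<alpha>' \<beta>' r' i'"
    using assms(7) by (auto simp: standard_def)
  obtain l c where "l < n" and v_eq: "v = sc c (\<rho> (0, 0, l) u)"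
    and vu: "grouplike_idx n w r i = grouplike_idx n w r' (i' - int l)"
    by (rule standard_eq_scaled_y_pow[OF assms(4) u assms(6)])
  obtain m c' where "m < n" and "u = sc c' (\<rho> (0, 0, m) v)"
    and uv: "grouplike_idx n w r' i' = grouplike_idx n w r (i - int m)"
    by (rule standard_eq_scaled_y_pow[OF assms(4) assms(6) u])
  have "l = 0"
    by (rule grouplike_idx_shifts_cancel[OF assms(1,2) vu uv])
  then have v_u: "v = sc c u"
    using v_eq by (simp only: rho_one)
  have "v \<noteq> 0"
    using assms(6) by (simp add: standard_type_def)
  then have "c \<noteq> 0"
    unfolding v_u by (rule contrapos_nn) simp
  then have "inverse c \<noteq> 0 \<and> u = sc (inverse c) v"
    unfolding v_u by simp
  then show ?thesis ..
qed

end
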